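(* Let $\mathbb{F}$ be a field of characteristic not $2$, let $V=\mathrm{span}\{u,v\}$ with a symmetric bilinear form $B$ satisfying $B(u,u)=B(v,v)=1$, $B(u,v)=\delta$, and let $\mathfrak{S}(\delta)=\mathbb{F}\oplus V$ with product $(\alpha+x)(\beta+y)=(\alpha\beta+B(x,y))+(\alpha y+\beta x)$ and Frobenius form $(\alpha+x,\beta+y)=2\alpha\beta+2B(x,y)$. Suppose $\delta\neq\pm1$ and that $\mathbb{F}$ contains the roots $\zeta,\zeta^{-1}$ of $x^2-2\delta x+1$. Then: (a) $\mathfrak{S}(\delta)$ contains exactly two $1$-dimensional nilpotent subalgebras $\mathbb{F}s$ and $\mathbb{F}t$ (i.e. $s^2=0=t^2$), and both lie in $V$; (b) $s,1,t$ form a basis of $\mathfrak{S}(\delta)$; moreover, if $s$ and $t$ are scaled so that $(s,t)=\frac14$ (equivalently $B(s,t)=\frac18$), then the idempotents of $\mathfrak{S}(\delta)$ are exactly $0$, $1$, and the elements $\xi s+\frac12+\xi^{-1}t$ for $\xi\in\mathbb{F}\setminus\{0\}$.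
   Context: Here $1$ denotes the element $1+0$ of $\mathbb{F}\oplus V$, which is the identity of $\mathfrak{S}(\delta)$. *)

theory Defs
  imports Main
begin

text \<open>An element
  (al, a, b) stands for al*1 + a*u + b*v.  Since delta ~= +-1 the Gram matrix of B
  on {u,v} is nonsingular, so u, v are linearly independent and V = F^2.\<close>

type_synonym 'a salg = "'a \<times> 'a \<times> 'a"

definition Bf :: "'a::field \<Rightarrow> 'a \<times> 'a \<Rightarrow> 'a \<times> 'a \<Rightarrow> 'a" where
  "Bf \<delta> x y = (case x of (a, b) \<Rightarrow> case y of (c, d) \<Rightarrow>
      a * c + b * d + \<delta> * (a * d + b * c))"

definition smul :: "'a::field \<Rightarrow> 'a salg \<Rightarrow> 'a salg \<Rightarrow> 'a salg" where
  "smul \<delta> x y = (case x of (al, a, b) \<Rightarrow> case y of (be, c, d) \<Rightarrow>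
      (al * be + Bf \<delta> (a, b) (c, d), al * c + be * a, al * d + be * b))"

definition sone :: "'a::field salg" where "sone = (1, 0, 0)"

definition sscale :: "'a::field \<Rightarrow> 'a salg \<Rightarrow> 'a salg" where
  "sscale c x = (case x of (al, a, b) \<Rightarrow> (c * al, c * a, c * b))"

definition sadd :: "'a::field salg \<Rightarrow> 'a salg \<Rightarrow> 'a salg" where
  "sadd x y = (case x of (al, a, b) \<Rightarrow> case y of (be, c, d) \<Rightarrow> (al + be, a + c, b + d))"

definition frob :: "'a::field \<Rightarrow> 'a salg \<Rightarrow> 'a salg \<Rightarrow> 'a" where
  "frob \<delta> x y = (case x of (al, a, b) \<Rightarrow> case y of (be, c, d) \<Rightarrow>
      2 * al * be + 2 * Bf \<delta> (a, b) (c, d))"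

definition Vsp :: "'a::field salg set" where "Vsp = {x. fst x = 0}"

definition line :: "'a::field salg \<Rightarrow> 'a salg set" where
  "line s = {sscale c s | c. True}"

definition nil1_subalg :: "'a::field \<Rightarrow> 'a salg set \<Rightarrow> bool" where
  "nil1_subalg \<delta> W \<longleftrightarrow> (\<exists>s. s \<noteq> (0, 0, 0) \<and> W = line s) \<and>
     (\<forall>x\<in>W. \<forall>y\<in>W. smul \<delta> x y \<in> W) \<and>
     (\<forall>x\<in>W. \<forall>y\<in>W. smul \<delta> x y = (0, 0, 0))"

definition is_basis3 :: "'a::field salg \<Rightarrow> 'a salg \<Rightarrow> 'a salg \<Rightarrow> bool" where
  "is_basis3 x y z \<longleftrightarrow>
     (\<forall>a b c. sadd (sscale a x) (sadd (sscale b y) (sscale c z)) = (0, 0, 0)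
        \<longrightarrow> a = 0 \<and> b = 0 \<and> c = 0) \<and>
     (\<forall>w. \<exists>a b c. w = sadd (sscale a x) (sadd (sscale b y) (sscale c z)))"

definition idempotents :: "'a::field \<Rightarrow> 'a salg set" where
  "idempotents \<delta> = {e. smul \<delta> e e = e}"

end

theory Submission
  imports Defs
begin

(* An element \<alpha> + x squares to (\<alpha>\<^sup>2 + B(x,x)) + 2\<alpha>x, so in characteristic not 2 it
   squares to zero iff \<alpha> = 0 and x is B-isotropic, and the idempotents other than 0 and 1
   are exactly the elements 1/2 + x with B(x,x) = 1/4.  A root \<zeta> of x\<^sup>2 - 2\<delta>x + 1 factors
   B(au + bv, au + bv) = (a + \<zeta>b)(a + \<zeta>\<inverse>b), and \<zeta> \<noteq> \<zeta>\<inverse> because \<delta> \<noteq> \<plusminus>1, so V has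
   exactly two isotropic lines F s and F t, and s, t span V.  Writing x = p s + q t gives
   B(x,x) = 2pq B(s,t) = pq/4 under the normalisation, so B(x,x) = 1/4 iff q = p\<inverse>. *)

lemma smul_self:
  "smul \<delta> (\<alpha>, a, b) (\<alpha>, a, b) = (\<alpha> * \<alpha> + Bf \<delta> (a, b) (a, b), 2 * \<alpha> * a, 2 * \<alpha> * b)"
  by (simp add: smul_def mult_2 algebra_simps)

lemma smul_self_eq_zero_iff:
  fixes \<alpha> a b :: "'a::field"
  assumes "(2::'a) \<noteq> 0"
  shows "smul \<delta> (\<alpha>, a, b) (\<alpha>, a, b) = (0, 0, 0) \<longleftrightarrow> \<alpha> = 0 \<and> Bf \<delta> (a, b) (a, b) = 0"
proof
  assume sq: "smul \<delta> (\<alpha>, a, b) (\<alpha>, a, b) = (0, 0, 0)"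
  have "\<alpha> = 0"
  proof (rule ccontr)
    assume "\<alpha> \<noteq> 0"
    with sq assms have "a = 0" "b = 0" by (simp_all add: smul_self)
    with sq \<open>\<alpha> \<noteq> 0\<close> show False by (simp add: smul_self Bf_def)
  qed
  with sq show "\<alpha> = 0 \<and> Bf \<delta> (a, b) (a, b) = 0" by (simp add: smul_self)
qed (simp add: smul_self)

lemma smul_sscale_sscale: "smul \<delta> (sscale c s) (sscale d s) = sscale (c * d) (smul \<delta> s s)"
  by (cases s) (simp add: smul_def sscale_def Bf_def algebra_simps)

lemma mem_line_iff: "x \<in> line s \<longleftrightarrow> (\<exists>c. x = sscale c s)"
  by (simp add: line_def)

lemma self_mem_line: "s \<in> line s"
  unfolding mem_line_iff by (rule exI[of _ 1]) (simp add: sscale_def split: prod.splits)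

lemma line_sscale:
  assumes "c \<noteq> 0"
  shows "line (sscale c s) = line s"
proof -
  have "sscale d (sscale c s) = sscale (d * c) s" for d
    by (simp add: sscale_def split: prod.splits)
  moreover have "sscale d s = sscale (d / c * c) s" for d
    using assms by simp
  ultimately show ?thesis
    unfolding line_def by metis
qed

lemma line_subset_Vsp: "fst s = 0 \<Longrightarrow> line s \<subseteq> Vsp"
  by (cases s) (auto simp: mem_line_iff Vsp_def sscale_def)

lemma line_eq_iff_det:
  fixes a b c d :: "'a::field"
  assumes "(a, b) \<noteq> (0, 0)" "(c, d) \<noteq> (0, 0)"
  shows "line (0, a, b) = line (0, c, d) \<longleftrightarrow> a * d = b * c"
proof
  assume "line (0, a, b) = line (0, c, d)"
  then have "(0, c, d) \<in> line (0, a, b)"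
    using self_mem_line by metis
  then obtain k where "(0, c, d) = sscale k (0, a, b)"
    by (auto simp: mem_line_iff)
  then show "a * d = b * c" by (simp add: sscale_def)
next
  assume det: "a * d = b * c"
  obtain k where "k \<noteq> 0" "(0, c, d) = sscale k (0, a, b)"
  proof (cases "a = 0")
    case True
    with assms det have "b \<noteq> 0" "c = 0" "d \<noteq> 0" by auto
    with True show thesis by (intro that[of "d / b"]) (simp_all add: sscale_def)
  next
    case False
    with assms det have "c \<noteq> 0" by auto
    with False det show thesis by (intro that[of "c / a"]) (simp_all add: sscale_def field_simps)
  qed
  then show "line (0, a, b) = line (0, c, d)" by (simp add: line_sscale)
qed

lemma nil1_subalg_iff:
  "nil1_subalg \<delta> W \<longleftrightarrow> (\<exists>s. s \<noteq> (0, 0, 0) \<and> W = line s \<and> smul \<delta> s s = (0, 0, 0))"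
proof
  assume "nil1_subalg \<delta> W"
  then show "\<exists>s. s \<noteq> (0, 0, 0) \<and> W = line s \<and> smul \<delta> s s = (0, 0, 0)"
    unfolding nil1_subalg_def using self_mem_line by blast
next
  assume "\<exists>s. s \<noteq> (0, 0, 0) \<and> W = line s \<and> smul \<delta> s s = (0, 0, 0)"
  then obtain s where s: "s \<noteq> (0, 0, 0)" "W = line s" "smul \<delta> s s = (0, 0, 0)"
    by blast
  have "smul \<delta> x y = (0, 0, 0)" if "x \<in> W" "y \<in> W" for x y
  proof -
    from that s(2) obtain c d where xy: "x = sscale c s" "y = sscale d s"
      by (auto simp: mem_line_iff)
    show ?thesis
      by (simp only: xy smul_sscale_sscale s(3)) (simp add: sscale_def)
  qed
  moreover have "(0, 0, 0) \<in> W"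
    unfolding s(2) mem_line_iff by (intro exI[of _ 0]) (simp add: sscale_def split: prod.splits)
  ultimately show "nil1_subalg \<delta> W"
    unfolding nil1_subalg_def using s by metis
qed

lemma nil1_subalg_line_isotropic:
  fixes s :: "'a::field salg"
  assumes "(2::'a) \<noteq> 0" "nil1_subalg \<delta> (line s)"
  obtains a b where "s = (0, a, b)" "Bf \<delta> (a, b) (a, b) = 0"
proof -
  obtain \<alpha> a b where s: "s = (\<alpha>, a, b)" by (cases s)
  have "smul \<delta> s s = (0, 0, 0)"
    using assms(2) self_mem_line unfolding nil1_subalg_def by blast
  with s assms(1) show thesis
    using that by (simp add: smul_self_eq_zero_iff)
qed

lemma quadratic_root_inverse:
  fixes \<zeta> \<delta> :: "'a::field"
  assumes "\<zeta>\<^sup>2 - 2 * \<delta> * \<zeta> + 1 = 0"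
  shows "\<zeta> \<noteq> 0" "\<zeta> + inverse \<zeta> = 2 * \<delta>"
proof -
  show "\<zeta> \<noteq> 0" using assms by auto
  have "(\<zeta> + inverse \<zeta>) * \<zeta> = 2 * \<delta> * \<zeta>"
    using assms \<open>\<zeta> \<noteq> 0\<close> by (simp add: power2_eq_square algebra_simps)
  with \<open>\<zeta> \<noteq> 0\<close> show "\<zeta> + inverse \<zeta> = 2 * \<delta>" by simp
qed

lemma quadratic_root_ne_inverse:
  fixes \<zeta> \<delta> :: "'a::field"
  assumes "(2::'a) \<noteq> 0" "\<delta> \<noteq> 1" "\<delta> \<noteq> -1" "\<zeta>\<^sup>2 - 2 * \<delta> * \<zeta> + 1 = 0"
  shows "\<zeta> \<noteq> inverse \<zeta>"
proof
  assume "\<zeta> = inverse \<zeta>"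
  then have inv: "inverse \<zeta> = \<zeta>" ..
  have "\<zeta> + \<zeta> = 2 * \<delta>"
    using quadratic_root_inverse(2)[OF assms(4)] unfolding inv .
  then have "2 * \<zeta> = 2 * \<delta>"
    by (metis mult_2)
  with assms(1) have "\<zeta> = \<delta>" by simp
  have "\<zeta> * \<zeta> = 1"
    using right_inverse[OF quadratic_root_inverse(1)[OF assms(4)]] unfolding inv .
  then have "(\<zeta> - 1) * (\<zeta> + 1) = 0"
    by (simp add: algebra_simps)
  then have "\<zeta> = 1 \<or> \<zeta> = -1"
    by (auto simp: eq_neg_iff_add_eq_0)
  with \<open>\<zeta> = \<delta>\<close> assms(2,3) show False by auto
qed

lemma Bf_self_factor:
  fixes \<zeta> \<eta> \<delta> :: "'a::field"
  assumes "\<zeta> * \<eta> = 1" "\<zeta> + \<eta> = 2 * \<delta>"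
  shows "Bf \<delta> (a, b) (a, b) = (a + \<zeta> * b) * (a + \<eta> * b)"
proof -
  have "(a + \<zeta> * b) * (a + \<eta> * b) = a * a + (\<zeta> + \<eta>) * (a * b) + \<zeta> * \<eta> * (b * b)"
    by (simp add: algebra_simps)
  also have "\<dots> = a * a + 2 * \<delta> * (a * b) + 1 * (b * b)"
    by (simp only: assms)
  also have "\<dots> = Bf \<delta> (a, b) (a, b)"
    by (simp add: Bf_def mult_2 algebra_simps)
  finally show ?thesis ..
qed

lemma isotropic_cases:
  fixes \<zeta> \<eta> \<delta> :: "'a::field"
  assumes "\<zeta> * \<eta> = 1" "\<zeta> + \<eta> = 2 * \<delta>"
    and "Bf \<delta> (a, b) (a, b) = 0" "(a, b) \<noteq> (0, 0)"
  shows "b \<noteq> 0 \<and> (a = - \<zeta> * b \<or> a = - \<eta> * b)"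
proof -
  have "a + \<zeta> * b = 0 \<or> a + \<eta> * b = 0"
    using assms(3) Bf_self_factor[OF assms(1,2)] by simp
  then have "a = - \<zeta> * b \<or> a = - \<eta> * b"
    by (auto simp: eq_neg_iff_add_eq_0)
  with assms(4) show ?thesis by auto
qed

lemma nil1_subalgs_eq:
  fixes \<zeta> \<delta> :: "'a::field"
  assumes "(2::'a) \<noteq> 0" "\<zeta>\<^sup>2 - 2 * \<delta> * \<zeta> + 1 = 0"
  shows "{W. nil1_subalg \<delta> W} = {line (0, -\<zeta>, 1), line (0, - inverse \<zeta>, 1)}"
proof -
  have \<zeta>: "\<zeta> * inverse \<zeta> = 1" "\<zeta> + inverse \<zeta> = 2 * \<delta>"
    using quadratic_root_inverse[OF assms(2)] by simp_all
  have isotropic: "Bf \<delta> (-\<zeta>, 1) (-\<zeta>, 1) = 0" "Bf \<delta> (- inverse \<zeta>, 1) (- inverse \<zeta>, 1) = 0"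
    by (simp_all add: Bf_self_factor[OF \<zeta>])
  show ?thesis
  proof (intro set_eqI iffI)
    fix W assume "W \<in> {W. nil1_subalg \<delta> W}"
    then obtain r where r: "r \<noteq> (0, 0, 0)" "W = line r" "smul \<delta> r r = (0, 0, 0)"
      by (auto simp: nil1_subalg_iff)
    then obtain a b where "r = (0, a, b)" "Bf \<delta> (a, b) (a, b) = 0"
      using assms(1) by (cases r) (auto simp: smul_self_eq_zero_iff)
    with r(1) isotropic_cases[OF \<zeta>, of a b]
    have "b \<noteq> 0" "r = sscale b (0, -\<zeta>, 1) \<or> r = sscale b (0, - inverse \<zeta>, 1)"
      by (auto simp: sscale_def)
    then show "W \<in> {line (0, -\<zeta>, 1), line (0, - inverse \<zeta>, 1)}"
      using r(2) by (auto simp: line_sscale)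
  next
    fix W assume "W \<in> {line (0, -\<zeta>, 1), line (0, - inverse \<zeta>, 1)}"
    moreover have "nil1_subalg \<delta> (line (0, x, 1))" if "Bf \<delta> (x, 1) (x, 1) = 0" for x
      by (intro nil1_subalg_iff[THEN iffD2] exI[of _ "(0, x, 1)"]) (simp add: smul_self that)
    ultimately show "W \<in> {W. nil1_subalg \<delta> W}"
      using isotropic by auto
  qed
qed

lemma four_neq_zero: "(2::'a::field) \<noteq> 0 \<Longrightarrow> (4::'a) \<noteq> 0"
  by (metis mult_2 mult_eq_0_iff numeral_Bit0)

lemma idempotents_eq:
  fixes \<delta> :: "'a::field"
  assumes "(2::'a) \<noteq> 0"
  shows "idempotents \<delta> =
    {(0, 0, 0), sone} \<union> {(1 / 2, x, y) | x y. Bf \<delta> (x, y) (x, y) = 1 / 4}"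
proof (intro set_eqI iffI)
  fix e assume "e \<in> idempotents \<delta>"
  then obtain \<alpha> x y where e: "e = (\<alpha>, x, y)"
    and idem: "\<alpha> * \<alpha> + Bf \<delta> (x, y) (x, y) = \<alpha>" "2 * \<alpha> * x = x" "2 * \<alpha> * y = y"
    by (cases e) (simp add: idempotents_def smul_self)
  show "e \<in> {(0, 0, 0), sone} \<union> {(1 / 2, x, y) | x y. Bf \<delta> (x, y) (x, y) = 1 / 4}"
  proof (cases "x = 0 \<and> y = 0")
    case True
    with idem(1) have "\<alpha> * \<alpha> = \<alpha> * 1" by (simp add: Bf_def)
    then have "\<alpha> = 0 \<or> \<alpha> = 1" by (metis mult_left_cancel)
    with True e show ?thesis by (auto simp: sone_def)
  next
    case False
    with idem(2,3) have "2 * \<alpha> = 1" by auto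
    with assms have "\<alpha> = 1 / 2" by (simp add: field_simps)
    have "Bf \<delta> (x, y) (x, y) = \<alpha> - \<alpha> * \<alpha>"
      using idem(1) by (simp add: algebra_simps)
    also have "\<dots> = 1 / 4"
      unfolding \<open>\<alpha> = 1 / 2\<close> using assms four_neq_zero[OF assms] by (simp add: field_simps)
    finally have "Bf \<delta> (x, y) (x, y) = 1 / 4" .
    with e \<open>\<alpha> = 1 / 2\<close> show ?thesis by blast
  qed
next
  fix e assume "e \<in> {(0, 0, 0), sone} \<union> {(1 / 2, x, y) | x y. Bf \<delta> (x, y) (x, y) = 1 / 4}"
  moreover have "(4::'a) \<noteq> 0"
    using assms by (rule four_neq_zero)
  ultimately show "e \<in> idempotents \<delta>"
    using assms by (auto simp: idempotents_def smul_self sone_def Bf_def field_simps)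
qed

lemma Bf_self_lincomb:
  "Bf \<delta> (p * a + q * c, p * b + q * d) (p * a + q * c, p * b + q * d) =
     p * p * Bf \<delta> (a, b) (a, b) + q * q * Bf \<delta> (c, d) (c, d) + 2 * p * q * Bf \<delta> (a, b) (c, d)"
  by (simp add: Bf_def algebra_simps mult_2)

lemma det_nonzero_span:
  fixes a b c d :: "'a::field"
  assumes "a * d - b * c \<noteq> 0"
  obtains p q where "x = p * a + q * c" "y = p * b + q * d"
proof -
  define D where "D = a * d - b * c"
  have D: "D \<noteq> 0" using assms by (simp add: D_def)
  have "(x * d - y * c) * a + (a * y - b * x) * c = x * D"
    "(x * d - y * c) * b + (a * y - b * x) * d = y * D"
    by (simp_all add: D_def algebra_simps)
  then have "x = (x * d - y * c) / D * a + (a * y - b * x) / D * c"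
    "y = (x * d - y * c) / D * b + (a * y - b * x) / D * d"
    using D by (simp_all add: divide_simps)
  then show thesis ..
qed

lemma det_nonzero_independent:
  fixes a b c d :: "'a::field"
  assumes "a * d - b * c \<noteq> 0" "p * a + q * c = 0" "p * b + q * d = 0"
  shows "p = 0 \<and> q = 0"
proof -
  have "p * (a * d - b * c) = d * (p * a + q * c) - c * (p * b + q * d)"
    "q * (a * d - b * c) = a * (p * b + q * d) - b * (p * a + q * c)"
    by (simp_all add: algebra_simps)
  then have "p * (a * d - b * c) = 0" "q * (a * d - b * c) = 0"
    by (simp_all only: assms(2,3) mult_zero_right diff_self)
  with assms(1) show ?thesis by simp
qed

lemma is_basis3_sone:
  fixes a b c d :: "'a::field"
  assumes "a * d - b * c \<noteq> 0"
  shows "is_basis3 (0, a, b) sone (0, c, d)"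
proof -
  have comb: "sadd (sscale p (0, a, b)) (sadd (sscale r sone) (sscale q (0, c, d))) =
      (r, p * a + q * c, p * b + q * d)" for p q r :: 'a
    by (simp add: sadd_def sscale_def sone_def)
  show ?thesis
    unfolding is_basis3_def comb
  proof (rule conjI; intro allI impI)
    fix p r q :: 'a
    assume "(r, p * a + q * c, p * b + q * d) = (0, 0, 0)"
    then show "p = 0 \<and> r = 0 \<and> q = 0"
      using det_nonzero_independent[OF assms, of p q] by simp
  next
    fix w :: "'a salg"
    obtain r x y where w: "w = (r, x, y)" by (cases w)
    obtain p q where "x = p * a + q * c" "y = p * b + q * d"
      using det_nonzero_span[OF assms] .
    then show "\<exists>p r q. w = (r, p * a + q * c, p * b + q * d)"
      unfolding w by blast
  qed
qed

lemma idempotents_hyperbolic_pair: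
  fixes a b c d \<delta> :: "'a::field"
  assumes two: "(2::'a) \<noteq> 0" and det: "a * d - b * c \<noteq> 0"
    and isotropic: "Bf \<delta> (a, b) (a, b) = 0" "Bf \<delta> (c, d) (c, d) = 0"
    and frob: "frob \<delta> (0, a, b) (0, c, d) = 1 / 4"
  shows "idempotents \<delta> = {(0, 0, 0), sone} \<union>
    {sadd (sscale \<xi> (0, a, b)) (sadd (sscale (1 / 2) sone) (sscale (inverse \<xi>) (0, c, d)))
      | \<xi>. \<xi> \<noteq> 0}"
proof -
  have pairing: "2 * Bf \<delta> (a, b) (c, d) = 1 / 4"
    using frob by (simp add: frob_def)
  have norm_lincomb: "Bf \<delta> (p * a + q * c, p * b + q * d) (p * a + q * c, p * b + q * d) = p * q * (1 / 4)"
    for p q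
  proof -
    have "Bf \<delta> (p * a + q * c, p * b + q * d) (p * a + q * c, p * b + q * d) =
        p * q * (2 * Bf \<delta> (a, b) (c, d))"
      by (simp only: Bf_self_lincomb isotropic) (simp add: algebra_simps)
    then show ?thesis by (simp only: pairing)
  qed
  have comb: "sadd (sscale p (0, a, b)) (sadd (sscale (1 / 2) sone) (sscale q (0, c, d))) =
      (1 / 2, p * a + q * c, p * b + q * d)" for p q :: 'a
    by (simp add: sadd_def sscale_def sone_def)
  have "{(1 / 2, x, y) | x y. Bf \<delta> (x, y) (x, y) = 1 / 4} =
    {sadd (sscale \<xi> (0, a, b)) (sadd (sscale (1 / 2) sone) (sscale (inverse \<xi>) (0, c, d)))
      | \<xi>. \<xi> \<noteq> 0}"
    unfolding comb
  proof (intro set_eqI iffI)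
    fix e assume "e \<in> {(1 / 2, x, y) | x y. Bf \<delta> (x, y) (x, y) = 1 / 4}"
    then obtain x y where e: "e = (1 / 2, x, y)" and "Bf \<delta> (x, y) (x, y) = 1 / 4"
      by blast
    moreover obtain p q where xy: "x = p * a + q * c" "y = p * b + q * d"
      using det_nonzero_span[OF det] .
    ultimately have "p * q = 1"
      using norm_lincomb[of p q] four_neq_zero[OF two] by simp
    then have "p \<noteq> 0" "q = inverse p"
      by (auto simp: inverse_unique)
    then show "e \<in> {(1 / 2, \<xi> * a + inverse \<xi> * c, \<xi> * b + inverse \<xi> * d) | \<xi>. \<xi> \<noteq> 0}"
      unfolding e xy by blast
  next
    fix e assume "e \<in> {(1 / 2, \<xi> * a + inverse \<xi> * c, \<xi> * b + inverse \<xi> * d) | \<xi>. \<xi> \<noteq> 0}"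
    then obtain \<xi> where "\<xi> \<noteq> 0" "e = (1 / 2, \<xi> * a + inverse \<xi> * c, \<xi> * b + inverse \<xi> * d)"
      by blast
    with norm_lincomb[of \<xi> "inverse \<xi>"]
    show "e \<in> {(1 / 2, x, y) | x y. Bf \<delta> (x, y) (x, y) = 1 / 4}"
      by simp
  qed
  then show ?thesis
    by (simp add: idempotents_eq[OF two])
qed

theorem lemma3p5:
  fixes \<delta> :: "'a::field"
  assumes char: "(2::'a) \<noteq> 0"
    and d1: "\<delta> \<noteq> 1" and d2: "\<delta> \<noteq> -1"
    and roots: "\<exists>\<zeta>::'a. \<zeta>\<^sup>2 - 2 * \<delta> * \<zeta> + 1 = 0"
  shows "(\<exists>s t. s \<noteq> (0, 0, 0) \<and> t \<noteq> (0, 0, 0) \<and> line s \<noteq> line t \<and>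
            {W. nil1_subalg \<delta> W} = {line s, line t} \<and> line s \<subseteq> Vsp \<and> line t \<subseteq> Vsp)
       \<and> (\<forall>s t. s \<noteq> (0, 0, 0) \<and> t \<noteq> (0, 0, 0) \<and> line s \<noteq> line t \<and>
            nil1_subalg \<delta> (line s) \<and> nil1_subalg \<delta> (line t) \<longrightarrow>
              is_basis3 s sone t \<and>
              (frob \<delta> s t = 1 / 4 \<longrightarrow>
                 idempotents \<delta> = {(0, 0, 0), sone} \<union>
                   {sadd (sscale \<xi> s) (sadd (sscale (1 / 2) sone) (sscale (inverse \<xi>) t))
                    | \<xi>. \<xi> \<noteq> 0}))"
proof (intro conjI allI impI)
  obtain \<zeta> where root: "\<zeta>\<^sup>2 - 2 * \<delta> * \<zeta> + 1 = 0"
    using roots ..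
  have "line (0, -\<zeta>, 1) \<noteq> line (0, - inverse \<zeta>, 1)"
    using line_eq_iff_det[of "-\<zeta>" 1 "- inverse \<zeta>" 1] quadratic_root_ne_inverse[OF char d1 d2 root]
    by simp
  then show "\<exists>s t. s \<noteq> (0, 0, 0) \<and> t \<noteq> (0, 0, 0) \<and> line s \<noteq> line t \<and>
      {W. nil1_subalg \<delta> W} = {line s, line t} \<and> line s \<subseteq> Vsp \<and> line t \<subseteq> Vsp"
    by (intro exI[of _ "(0, -\<zeta>, 1)"] exI[of _ "(0, - inverse \<zeta>, 1)"])
      (simp add: nil1_subalgs_eq[OF char root] line_subset_Vsp)
next
  fix s t :: "'a salg"
  assume st: "s \<noteq> (0, 0, 0) \<and> t \<noteq> (0, 0, 0) \<and> line s \<noteq> line t \<and>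
    nil1_subalg \<delta> (line s) \<and> nil1_subalg \<delta> (line t)"
  obtain a b where s: "s = (0, a, b)" "Bf \<delta> (a, b) (a, b) = 0"
    using nil1_subalg_line_isotropic[OF char] st by blast
  obtain c d where t: "t = (0, c, d)" "Bf \<delta> (c, d) (c, d) = 0"
    using nil1_subalg_line_isotropic[OF char] st by blast
  have det: "a * d - b * c \<noteq> 0"
    using st line_eq_iff_det[of a b c d] unfolding s t by auto
  show "is_basis3 s sone t"
    unfolding s t using det by (rule is_basis3_sone)
  show "frob \<delta> s t = 1 / 4 \<Longrightarrow> idempotents \<delta> = {(0, 0, 0), sone} \<union>
      {sadd (sscale \<xi> s) (sadd (sscale (1 / 2) sone) (sscale (inverse \<xi>) t)) | \<xi>. \<xi> \<noteq> 0}"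
    unfolding s t using idempotents_hyperbolic_pair[OF char det s(2) t(2)] .
qed

end
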